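(* The following are equivalent: (i) $\sup_{d\in\mathbb N} n^{X_d}(\varepsilon)=\infty$ for every $\varepsilon\in(0,1)$; (ii) $\inf_{d\in\mathbb N}\bar\lambda^{X_d}_1=0$.
   Context: For each $d\in\mathbb N$, $X_d$ is a random element of a separable Hilbert space $H_d$ with $\mathbb E X_d=0$ and $\mathbb E\|X_d\|_{H_d}^2<\infty$. For a centered Hilbert-space random element $Z$ with finite second moment, $\lambda^Z_1\ge\lambda^Z_2\ge\dots\ge 0$ denote the eigenvalues of its covariance operator $K^Z$ listed with multiplicity (padded with zeros if there are finitely many), $\Lambda^Z=\sum_k\lambda^Z_k=\mathbb E\|Z\|^2$, and $\bar\lambda^Z_k=\lambda^Z_k/\Lambda^Z$. It is assumed that $\lambda^{X_d}_1>0$ for all $d$. The average case approximation complexity is $n^{X_d}(\varepsilon)=\min\{n\in\mathbb N: e^{X_d}(n)\le \varepsilon\, e^{X_d}(0)\}$ for $\varepsilon\in(0,1)$, where $e^{X_d}(0)=(\mathbb E\|X_d\|^2)^{1/2}$ and $e^{X_d}(n)$ is the infimum of $(\mathbb E\|X_d-\sum_{m=1}^n l_m(X_d)\psi_m\|^2)^{1/2}$ over all $\psi_m\in H_d$, $l_m\in H_d^*$; equivalently $n^{X_d}(\varepsilon)=\min\{n\in\mathbb N:\ \sum_{k>n}\bar\lambda^{X_d}_k\le\varepsilon^2\}$. *)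

theory Defs
  imports "HOL-Analysis.Analysis" "HOL-Library.Extended_Nat"
begin

text \<open>A covariance eigenvalue sequence (0-based: lam 0 is the largest eigenvalue
  lambda_1), listed with multiplicity in nonincreasing order, nonnegative,
  padded with zeros, with finite trace.\<close>
definition eig_seq :: "(nat \<Rightarrow> real) \<Rightarrow> bool" where
  "eig_seq lam \<longleftrightarrow> (\<forall>k. 0 \<le> lam k) \<and> decseq lam \<and> summable lam"

definition trace_eig :: "(nat \<Rightarrow> real) \<Rightarrow> real" where
  "trace_eig lam = (\<Sum>k. lam k)"

definition nlam :: "(nat \<Rightarrow> real) \<Rightarrow> nat \<Rightarrow> real" where
  "nlam lam k = lam k / trace_eig lam"

text \<open>Average case complexity n(eps) = min { n : sum_(k>n) nlam_k \<le> eps^2 }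
  (1-based tail sum over k > n = 0-based sum over k \<ge> n).\<close>
definition avg_complexity :: "(nat \<Rightarrow> real) \<Rightarrow> real \<Rightarrow> nat" where
  "avg_complexity lam eps = (LEAST n. (\<Sum>k. nlam lam (k + n)) \<le> eps\<^sup>2)"

end

theory Submission
  imports Defs
begin

text \<open>The normalized eigenvalues \<open>p\<^sub>1 \<ge> p\<^sub>2 \<ge> \<dots>\<close> sum to one, so the first \<open>n\<close>
  of them have mass at most \<open>n p\<^sub>1\<close>, while the tail beyond \<open>n(\<epsilon>)\<close> has mass at most
  \<open>\<epsilon>\<^sup>2\<close>. Hence \<open>n(\<epsilon>) p\<^sub>1 \<ge> 1 - \<epsilon>\<^sup>2\<close>, and \<open>n(\<epsilon>)\<close> is unbounded in \<open>d\<close> when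
  \<open>p\<^sub>1\<close> gets arbitrarily small. Conversely, if \<open>p\<^sub>1 \<ge> c > 0\<close> for all \<open>d\<close>, then for
  \<open>\<epsilon>\<^sup>2 = 1 - c/2\<close> the tail after the first eigenvalue has mass \<open>1 - p\<^sub>1 < \<epsilon>\<^sup>2\<close>,
  so \<open>n(\<epsilon>) \<le> 1\<close> uniformly in \<open>d\<close>.\<close>

context
  fixes l :: "nat \<Rightarrow> real"
  assumes eig: "eig_seq l" and pos: "0 < l 0"
begin

lemma trace_eig_ge_first: "l 0 \<le> trace_eig l"
  using eig sum_le_suminf[of l "{0}"] unfolding eig_seq_def trace_eig_def by auto

lemma trace_eig_pos: "0 < trace_eig l"
  using trace_eig_ge_first pos by linarith

lemma nlam_nonneg: "0 \<le> nlam l k"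
  using eig trace_eig_pos unfolding eig_seq_def nlam_def by simp

lemma nlam_le_nlam_0: "nlam l k \<le> nlam l 0"
  using eig trace_eig_pos unfolding eig_seq_def nlam_def
  by (simp add: decseq_def divide_right_mono)

lemma nlam_0_le_1: "nlam l 0 \<le> 1"
  using trace_eig_ge_first trace_eig_pos unfolding nlam_def by simp

lemma summable_nlam: "summable (nlam l)"
  using eig unfolding eig_seq_def nlam_def by (simp add: summable_divide)

lemma suminf_nlam: "(\<Sum>k. nlam l k) = 1"
  using eig trace_eig_pos unfolding eig_seq_def nlam_def trace_eig_def
  by (simp add: suminf_divide)

lemma suminf_nlam_shift: "(\<Sum>k. nlam l (k + n)) = 1 - (\<Sum>k<n. nlam l k)"
  using suminf_minus_initial_segment[OF summable_nlam] suminf_nlam by simp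

lemma ex_suminf_nlam_shift_le:
  assumes "0 < e"
  shows "\<exists>n. (\<Sum>k. nlam l (k + n)) \<le> e"
proof -
  obtain n where "norm (\<Sum>k. nlam l (k + n)) < e"
    using suminf_exist_split[OF assms summable_nlam] by blast
  then show ?thesis
    by (metis abs_less_iff less_imp_le real_norm_def)
qed

lemma avg_complexity_le_1:
  assumes "1 - nlam l 0 \<le> eps\<^sup>2"
  shows "avg_complexity l eps \<le> 1"
  unfolding avg_complexity_def
  by (rule Least_le) (use assms suminf_nlam_shift[of 1] in simp)

lemma avg_complexity_mult_nlam_0_ge:
  assumes "0 < eps"
  shows "1 - eps\<^sup>2 \<le> real (avg_complexity l eps) * nlam l 0"
proof -
  define n where "n = avg_complexity l eps"
  have "(\<Sum>k. nlam l (k + n)) \<le> eps\<^sup>2"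
    unfolding n_def avg_complexity_def
    by (rule LeastI_ex) (use ex_suminf_nlam_shift_le assms in simp)
  then have "1 - eps\<^sup>2 \<le> (\<Sum>k<n. nlam l k)"
    by (simp add: suminf_nlam_shift)
  also have "\<dots> \<le> (\<Sum>k<n. nlam l 0)"
    by (rule sum_mono) (rule nlam_le_nlam_0)
  finally show ?thesis
    by (simp add: n_def)
qed

lemma nlam_0_ge_if_avg_complexity_le:
  assumes "0 < eps" and "avg_complexity l eps \<le> m"
  shows "(1 - eps\<^sup>2) / real m \<le> nlam l 0"
proof (cases "m = 0")
  case False
  have "1 - eps\<^sup>2 \<le> real (avg_complexity l eps) * nlam l 0"
    using avg_complexity_mult_nlam_0_ge[OF assms(1)] .
  also have "\<dots> \<le> real m * nlam l 0"
    using assms(2) nlam_nonneg by (intro mult_right_mono) simp_all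
  finally show ?thesis
    using False by (simp add: divide_le_eq mult.commute)
qed (simp add: nlam_nonneg)

end

lemma avg_complexity_uniformly_le_1:
  fixes lam :: "'i \<Rightarrow> nat \<Rightarrow> real"
  assumes eig: "\<And>d. eig_seq (lam d)" and pos: "\<And>d. 0 < lam d 0"
    and "0 < c" and c_le: "\<And>d. c \<le> nlam (lam d) 0"
  shows "\<exists>eps. 0 < eps \<and> eps < 1 \<and> (\<forall>d. avg_complexity (lam d) eps \<le> 1)"
proof (intro exI conjI allI)
  define eps where "eps = sqrt (1 - c / 2)"
  have "c \<le> 1"
    using c_le nlam_0_le_1[OF eig pos] by (meson order_trans)
  then show "0 < eps" "eps < 1"
    using \<open>0 < c\<close> by (simp_all add: eps_def)
  show "avg_complexity (lam d) eps \<le> 1" for d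
    by (rule avg_complexity_le_1[OF eig pos])
      (use c_le[of d] \<open>0 < c\<close> \<open>c \<le> 1\<close> in \<open>simp add: eps_def\<close>)
qed

theorem proposition2:
  fixes lam :: "nat \<Rightarrow> nat \<Rightarrow> real"
  assumes eig: "\<And>d. eig_seq (lam d)"
    and pos: "\<And>d. lam d 0 > 0"
  shows "(\<forall>eps. 0 < eps \<and> eps < 1 \<longrightarrow> (SUP d. enat (avg_complexity (lam d) eps)) = \<infinity>)
         \<longleftrightarrow> (INF d. nlam (lam d) 0) = 0"
proof -
  define c where "c = (INF d. nlam (lam d) 0)"
  have bdd: "bdd_below (range (\<lambda>d. nlam (lam d) 0))"
    using nlam_nonneg[OF eig pos] by (intro bdd_belowI2[where m=0])
  have c_le: "c \<le> nlam (lam d) 0" for d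
    unfolding c_def by (rule cINF_lower[OF bdd]) simp
  have c_nonneg: "0 \<le> c"
    unfolding c_def by (rule cINF_greatest) (auto intro: nlam_nonneg[OF eig pos])
  show ?thesis
    unfolding c_def[symmetric]
  proof (intro iffI allI impI)
    assume unbounded: "\<forall>eps. 0 < eps \<and> eps < 1 \<longrightarrow> (SUP d. enat (avg_complexity (lam d) eps)) = \<infinity>"
    show "c = 0"
    proof (rule ccontr)
      assume "c \<noteq> 0"
      then obtain eps where "0 < eps" "eps < 1" "\<And>d. avg_complexity (lam d) eps \<le> 1"
        using avg_complexity_uniformly_le_1[OF eig pos _ c_le] c_nonneg by force
      then have "(SUP d. enat (avg_complexity (lam d) eps)) \<le> 1"
        by (intro SUP_least) (simp add: one_enat_def)
      then show False
        using unbounded \<open>0 < eps\<close> \<open>eps < 1\<close> by auto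
    qed
  next
    fix eps :: real
    assume "c = 0" and eps: "0 < eps \<and> eps < 1"
    show "(SUP d. enat (avg_complexity (lam d) eps)) = \<infinity>"
    proof (rule ccontr)
      assume "(SUP d. enat (avg_complexity (lam d) eps)) \<noteq> \<infinity>"
      then obtain m where "(SUP d. enat (avg_complexity (lam d) eps)) = enat m"
        by auto
      then have "avg_complexity (lam d) eps \<le> Suc m" for d
        by (metis SUP_upper UNIV_I enat_ord_simps(1) le_SucI)
      then have "(1 - eps\<^sup>2) / real (Suc m) \<le> c"
        unfolding c_def using eps
        by (intro cINF_greatest nlam_0_ge_if_avg_complexity_le[OF eig pos]) auto
      then show False
        using \<open>c = 0\<close> eps power_strict_mono[of eps 1 2] by (simp add: divide_le_0_iff)
    qed
  qed
qed

end
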